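(* For any $F\in\mathscr{F}_1$ and $i\in[F]$: (i) $\mathcal{P}^2_{F,i}\supseteq\{0a,1b\}$ for some $a,b\in\mathcal{C}$; in particular $|\mathcal{P}^2_{F,i}|\ge2$. (ii) If $|\mathcal{P}^2_{F,i}|=2$, then (a) $|f_i(s)|\ge2$ for all $s\in\mathcal{S}$, and (b) $\mathcal{P}^2_{F,i}=\bar{\mathcal{P}}^2_{F,i}=\{0a,1b\}$ for some $a,b\in\mathcal{C}$. (iii) For any $s,s'\in\mathcal{S}$ with $s\ne s'$ and $f_i(s)=f_i(s')$, $|\mathcal{P}^2_{F,\tau_i(s)}|=|\mathcal{P}^2_{F,\tau_i(s')}|=2$. (iv) For any $s\in\mathcal{S}$, $|\mathcal{S}_{F,i}(f_i(s))|\le1$ if $\bar{\mathcal{P}}^0_{F,i}(f_i(s))\ne\emptyset$, and $|\mathcal{S}_{F,i}(f_i(s))|\le2$ if $\bar{\mathcal{P}}^0_{F,i}(f_i(s))=\emptyset$. (v) For any $s,s'\in\mathcal{S}$, $f_i(s')\ne f_i(s)0$ and $f_i(s')\ne f_i(s)1$. (vi) For any $s\in\mathcal{S}$, $|\bar{\mathcal{P}}^1_{F,i}(f_i(s)0)|\le1$ and $|\bar{\mathcal{P}}^1_{F,i}(f_i(s)1)|\le1$.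
   Context: $\mathcal{S}$ is a finite source alphabet with $|\mathcal{S}|\ge 2$ and $\mathcal{C}=\{0,1\}$; $\mathcal{A}^k,\mathcal{A}^{\ast},\mathcal{A}^{+}$ are sequences of length $k$, finite, positive finite length; $\lambda$ empty sequence; $\preceq$ prefix, $\prec$ proper prefix; $\mathrm{suff}(x_1\cdots x_n)=x_2\cdots x_n$. A code-tuple $F$ with $m\ge1$ code tables consists of maps $f_i:\mathcal{S}\to\mathcal{C}^{\ast}$ and $\tau_i:\mathcal{S}\to\{0,\dots,m-1\}$, $i\in[F]=\{0,\dots,m-1\}$. $f_i^{\ast}(\lambda)=\lambda$, $f_i^{\ast}(\pmb{x})=f_i(x_1)f^{\ast}_{\tau_i(x_1)}(\mathrm{suff}(\pmb{x}))$. $\mathcal{S}_{F,i}(\pmb{b})=\{s:f_i(s)=\pmb{b}\}$. For integer $k\ge0$, $\pmb{b}\in\mathcal{C}^{\ast}$: $\mathcal{P}^k_{F,i}(\pmb{b})$ is the set of $\pmb{c}\in\mathcal{C}^k$ such that some $\pmb{x}=x_1\cdots x_n\in\mathcal{S}^{+}$ has $f_i^{\ast}(\pmb{x})\succeq\pmb{b}\pmb{c}$ and $f_i(x_1)\succeq\pmb{b}$; $\bar{\mathcal{P}}^k_{F,i}(\pmb{b})$ the same with $f_i(x_1)\succ\pmb{b}$; $\mathcal{P}^k_{F,i}=\mathcal{P}^k_{F,i}(\lambda)$, $\bar{\mathcal{P}}^k_{F,i}=\bar{\mathcal{P}}^k_{F,i}(\lambda)$. $F\in\mathscr{F}_{2\text{-}\mathrm{dec}}$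 if $\mathcal{P}^2_{F,\tau_i(s)}\cap\bar{\mathcal{P}}^2_{F,i}(f_i(s))=\emptyset$ for all $i,s$, and $\mathcal{P}^2_{F,\tau_i(s)}\cap\mathcal{P}^2_{F,\tau_i(s')}=\emptyset$ whenever $s\ne s'$, $f_i(s)=f_i(s')$. Fix $\mu:\mathcal{S}\to(0,1]$ with $\sum_s\mu(s)=1$; $Q_{i,j}(F)=\sum_{s:\tau_i(s)=j}\mu(s)$; $F\in\mathscr{F}_{\mathrm{reg}}$ if $\pmb{\pi}Q(F)=\pmb{\pi}$, $\sum_i\pi_i=1$ has a unique solution. $\mathscr{F}_1=\{F\in\mathscr{F}_{\mathrm{reg}}\cap\mathscr{F}_{2\text{-}\mathrm{dec}}:\mathcal{P}^1_{F,i}=\{0,1\}\text{ for all }i\in[F]\}$. *)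

theory Defs
  imports Complex_Main "HOL-Library.Sublist"
begin

text \<open>Code symbols: False stands for 0, True for 1. A code-tuple with m code tables
is given by m, f :: nat => 's => bool list (f i = f_i) and t :: nat => 's => nat (t i = tau_i);
the source alphabet is the finite type 's.\<close>

definition code_tuple :: "nat \<Rightarrow> (nat \<Rightarrow> 's \<Rightarrow> nat) \<Rightarrow> bool" where
  "code_tuple m t \<longleftrightarrow> m \<ge> 1 \<and> (\<forall>i<m. \<forall>s. t i s < m)"

fun fstar :: "(nat \<Rightarrow> 's \<Rightarrow> bool list) \<Rightarrow> (nat \<Rightarrow> 's \<Rightarrow> nat) \<Rightarrow> nat \<Rightarrow> 's list \<Rightarrow> bool list" where
  "fstar f t i [] = []"
| "fstar f t i (x # xs) = f i x @ fstar f t (t i x) xs"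

definition Pk :: "(nat \<Rightarrow> 's \<Rightarrow> bool list) \<Rightarrow> (nat \<Rightarrow> 's \<Rightarrow> nat) \<Rightarrow> nat \<Rightarrow> nat \<Rightarrow> bool list \<Rightarrow> bool list set" where
  "Pk f t k i b = {c. length c = k \<and> (\<exists>x. x \<noteq> [] \<and> prefix (b @ c) (fstar f t i x) \<and> prefix b (f i (hd x)))}"

definition Pbark :: "(nat \<Rightarrow> 's \<Rightarrow> bool list) \<Rightarrow> (nat \<Rightarrow> 's \<Rightarrow> nat) \<Rightarrow> nat \<Rightarrow> nat \<Rightarrow> bool list \<Rightarrow> bool list set" where
  "Pbark f t k i b = {c. length c = k \<and> (\<exists>x. x \<noteq> [] \<and> prefix (b @ c) (fstar f t i x) \<and> strict_prefix b (f i (hd x)))}"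

definition Sset :: "(nat \<Rightarrow> 's \<Rightarrow> bool list) \<Rightarrow> nat \<Rightarrow> bool list \<Rightarrow> 's set" where
  "Sset f i b = {s. f i s = b}"

definition two_dec :: "nat \<Rightarrow> (nat \<Rightarrow> 's \<Rightarrow> bool list) \<Rightarrow> (nat \<Rightarrow> 's \<Rightarrow> nat) \<Rightarrow> bool" where
  "two_dec m f t \<longleftrightarrow>
     (\<forall>i<m. \<forall>s. Pk f t 2 (t i s) [] \<inter> Pbark f t 2 i (f i s) = {}) \<and>
     (\<forall>i<m. \<forall>s s'. s \<noteq> s' \<and> f i s = f i s' \<longrightarrow> Pk f t 2 (t i s) [] \<inter> Pk f t 2 (t i s') [] = {})"

definition Qmat :: "('s::finite \<Rightarrow> real) \<Rightarrow> (nat \<Rightarrow> 's \<Rightarrow> nat) \<Rightarrow> nat \<Rightarrow> nat \<Rightarrow> real" where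
  "Qmat \<mu> t i j = (\<Sum>s\<in>{s. t i s = j}. \<mu> s)"

definition regular :: "('s::finite \<Rightarrow> real) \<Rightarrow> nat \<Rightarrow> (nat \<Rightarrow> 's \<Rightarrow> nat) \<Rightarrow> bool" where
  "regular \<mu> m t \<longleftrightarrow> (\<exists>!\<pi>::nat \<Rightarrow> real. (\<forall>j\<ge>m. \<pi> j = 0) \<and>
       (\<forall>j<m. (\<Sum>i<m. \<pi> i * Qmat \<mu> t i j) = \<pi> j) \<and> (\<Sum>i<m. \<pi> i) = 1)"

definition F1 :: "('s::finite \<Rightarrow> real) \<Rightarrow> nat \<Rightarrow> (nat \<Rightarrow> 's \<Rightarrow> bool list) \<Rightarrow> (nat \<Rightarrow> 's \<Rightarrow> nat) \<Rightarrow> bool" where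
  "F1 \<mu> m f t \<longleftrightarrow> code_tuple m t \<and> regular \<mu> m t \<and> two_dec m f t \<and>
     (\<forall>i<m. Pk f t 1 i [] = {[False], [True]})"

end

theory Submission
  imports Defs
begin

text \<open>Since every table can emit either bit first (P^1_j = {0,1}), every encoding can be
continued by any bit; hence each P^2_j contains words 0a and 1b. If two symbols share the
codeword f_i(s), 2-decodability makes the sets P^2 of their successor tables disjoint; as each
holds at least two of the four words of length 2, together they are exactly these four words.
This gives (iii), excludes a third symbol with that codeword, and excludes any codeword strictly
extending f_i(s), since its continuations of length 2 would lie in one of the two sets and in
Pbar^2_i(f_i(s)) (iv). If de is in P^2 of table tau_i(s), then de is not in Pbar^2_i(f_i(s)):
so no codeword equals f_i(s)d (v), and e is not in Pbar^1_i(f_i(s)d) (vi). Finally, if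
|P^2_i| = 2, a codeword d would put both d0 and d1 into P^2_i, and an empty codeword f_i(s)
forces P^2 of tau_i(s) to equal P^2_i, which clashes with 2-decodability whatever the codeword
of any other symbol is (ii).\<close>

lemma prefix_append_nth:
  assumes "prefix p l" and "length p < length l"
  shows "prefix (p @ [l ! length p]) l"
proof -
  have "take (length p) l = p"
    using assms(1) by (auto simp: prefix_def)
  then have "take (Suc (length p)) l = p @ [l ! length p]"
    using assms(2) by (simp add: take_Suc_conv_app_nth)
  then show ?thesis
    by (metis take_is_prefix)
qed

lemma card_disjoint_halves:
  assumes "finite U" and "A \<subseteq> U" and "B \<subseteq> U" and "A \<inter> B = {}"
    and "card U \<le> 2 * k" and "k \<le> card A" and "k \<le> card B"
  shows "A \<union> B = U \<and> card A = k \<and> card B = k"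
proof -
  have "finite A" "finite B"
    using assms(1-3) finite_subset by auto
  then have "card (A \<union> B) = card A + card B"
    using assms(4) by (rule card_Un_disjoint)
  moreover have "card (A \<union> B) \<le> card U"
    using assms(1-3) by (simp add: card_mono)
  ultimately have "card A = k" "card B = k" "card (A \<union> B) = card U"
    using assms(5-7) by linarith+
  moreover have "A \<union> B = U"
    using assms(1-3) \<open>card (A \<union> B) = card U\<close> by (simp add: card_subset_eq)
  ultimately show ?thesis
    by blast
qed

lemma finite_bool_lists_length: "finite {c :: bool list. length c = k}"
  using finite_lists_length_eq[of "UNIV :: bool set" k] by simp

lemma card_bool_lists_length: "card {c :: bool list. length c = k} = 2 ^ k"
  using card_lists_length_eq[of "UNIV :: bool set" k] by simp

lemma Pk_subset_length: "Pk f t k j b \<subseteq> {c. length c = k}"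
  by (auto simp: Pk_def)

lemma finite_Pk: "finite (Pk f t k j (b :: bool list))"
  using finite_bool_lists_length Pk_subset_length by (rule finite_subset[rotated])

lemma Pbark_subset_Pk: "Pbark f t k i b \<subseteq> Pk f t k i b"
  by (auto simp: Pbark_def Pk_def prefix_order.less_imp_le)

lemma Pbark_snoc: "c \<in> Pbark f t k i (b @ [d]) \<Longrightarrow> d # c \<in> Pbark f t (Suc k) i b"
proof -
  assume "c \<in> Pbark f t k i (b @ [d])"
  then obtain x where "length c = k" "x \<noteq> []" "prefix (b @ d # c) (fstar f t i x)"
    and "strict_prefix (b @ [d]) (f i (hd x))"
    by (auto simp: Pbark_def)
  moreover have "strict_prefix b (b @ [d])"
    by (simp add: strict_prefix_def)
  ultimately show ?thesis
    unfolding Pbark_def by (auto dest: prefix_order.less_trans)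
qed

lemma Pbark_Nil_eq_Pk: "(\<And>s. f i s \<noteq> []) \<Longrightarrow> Pbark f t k i [] = Pk f t k i []"
  by (auto simp: Pbark_def Pk_def strict_prefix_def) metis

lemma Pk_subset_of_empty_codeword: "f i s = [] \<Longrightarrow> Pk f t k (t i s) [] \<subseteq> Pk f t k i []"
  unfolding Pk_def by (auto intro!: exI[of _ "s # _"])

locale complete_code_tuple =
  fixes m :: nat and f :: "nat \<Rightarrow> 's \<Rightarrow> bool list" and t :: "nat \<Rightarrow> 's \<Rightarrow> nat"
  assumes code_tuple: "code_tuple m t"
    and Pk_1: "j < m \<Longrightarrow> Pk f t 1 j [] = {[False], [True]}"
begin

lemma t_less: "i < m \<Longrightarrow> t i s < m"
  using code_tuple by (simp add: code_tuple_def)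

lemma fstar_extend: "j < m \<Longrightarrow> \<exists>y. prefix (fstar f t j x @ [c]) (fstar f t j (x @ y))"
proof (induction x arbitrary: j)
  case Nil
  then have "[c] \<in> Pk f t 1 j []"
    using Pk_1 by (cases c) auto
  then show ?case
    by (auto simp: Pk_def)
next
  case (Cons s x)
  then show ?case
    using t_less by auto
qed

lemma codeword_then_bit: "i < m \<Longrightarrow> \<exists>y. prefix (f i s @ [c]) (fstar f t i (s # y))"
  using fstar_extend[of i "[s]" c] by simp

lemma fstar_prefix_extend:
  assumes "j < m" and "prefix p (fstar f t j x)"
  shows "\<exists>e y. prefix (p @ [e]) (fstar f t j (x @ y))"
proof -
  obtain y where y: "prefix (fstar f t j x @ [True]) (fstar f t j (x @ y))"
    using fstar_extend[OF assms(1)] by blast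
  have "prefix p (fstar f t j (x @ y))"
    using assms(2) y by (meson prefix_append prefix_order.trans)
  moreover have "length p < length (fstar f t j (x @ y))"
    using prefix_length_le[OF assms(2)] prefix_length_le[OF y] by simp
  ultimately show ?thesis
    using prefix_append_nth by blast
qed

lemma Pk_extend:
  assumes "j < m" and "c \<in> Pk f t k j b"
  shows "\<exists>e. c @ [e] \<in> Pk f t (Suc k) j b"
proof -
  obtain x where x: "length c = k" "x \<noteq> []" "prefix (b @ c) (fstar f t j x)" "prefix b (f j (hd x))"
    using assms(2) by (auto simp: Pk_def)
  then obtain e y where "prefix ((b @ c) @ [e]) (fstar f t j (x @ y))"
    using fstar_prefix_extend[OF assms(1)] by blast
  then have "c @ [e] \<in> Pk f t (Suc k) j b"
    unfolding Pk_def using x by (intro CollectI conjI exI[of _ "x @ y"]) auto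
  then show ?thesis ..
qed

lemma Pbark_extend:
  assumes "i < m" and "c \<in> Pbark f t k i b"
  shows "\<exists>e. c @ [e] \<in> Pbark f t (Suc k) i b"
proof -
  obtain x where x: "length c = k" "x \<noteq> []" "prefix (b @ c) (fstar f t i x)"
      "strict_prefix b (f i (hd x))"
    using assms(2) by (auto simp: Pbark_def)
  then obtain e y where "prefix ((b @ c) @ [e]) (fstar f t i (x @ y))"
    using fstar_prefix_extend[OF assms(1)] by blast
  then have "c @ [e] \<in> Pbark f t (Suc k) i b"
    unfolding Pbark_def using x by (intro CollectI conjI exI[of _ "x @ y"]) auto
  then show ?thesis ..
qed

lemma Pbark_nonempty: "i < m \<Longrightarrow> Pbark f t 0 i b \<noteq> {} \<Longrightarrow> Pbark f t k i b \<noteq> {}"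
  by (induction k) (auto dest: Pbark_extend)

lemma Pk_2_first_bit: "j < m \<Longrightarrow> \<exists>e. [d, e] \<in> Pk f t 2 j []"
  using Pk_extend[of j "[d]" 1 "[]"] Pk_1 by (cases d) (auto simp: numeral_2_eq_2)

lemma Pk_2_both_bits: "j < m \<Longrightarrow> \<exists>a b. {[False, a], [True, b]} \<subseteq> Pk f t 2 j []"
  using Pk_2_first_bit[of j False] Pk_2_first_bit[of j True] by blast

lemma card_Pk_2_ge: "j < m \<Longrightarrow> 2 \<le> card (Pk f t 2 j [])"
proof -
  assume "j < m"
  then obtain a b where "{[False, a], [True, b]} \<subseteq> Pk f t 2 j []"
    using Pk_2_both_bits by blast
  then have "card {[False, a], [True, b]} \<le> card (Pk f t 2 j [])"
    by (rule card_mono[OF finite_Pk])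
  then show ?thesis
    by simp
qed

lemma Pk_2_eq_pair:
  assumes "j < m" and "card (Pk f t 2 j []) = 2"
  shows "\<exists>a b. Pk f t 2 j [] = {[False, a], [True, b]}"
proof -
  obtain a b where "{[False, a], [True, b]} \<subseteq> Pk f t 2 j []"
    using Pk_2_both_bits[OF assms(1)] by blast
  moreover have "card {[False, a], [True, b]} = card (Pk f t 2 j [])"
    using assms(2) by simp
  ultimately show ?thesis
    using card_subset_eq[OF finite_Pk] by metis
qed

end

locale complete_two_dec = complete_code_tuple +
  assumes two_dec: "two_dec m f t"
begin

lemma Pk_successor_disjoint_Pbark: "i < m \<Longrightarrow> Pk f t 2 (t i s) [] \<inter> Pbark f t 2 i (f i s) = {}"
  using two_dec by (simp add: two_dec_def)

lemma Pk_successors_disjoint: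
  "i < m \<Longrightarrow> s \<noteq> s' \<Longrightarrow> f i s = f i s' \<Longrightarrow> Pk f t 2 (t i s) [] \<inter> Pk f t 2 (t i s') [] = {}"
  using two_dec by (simp add: two_dec_def)

lemma codeword_not_snoc:
  assumes "i < m"
  shows "f i s' \<noteq> f i s @ [d]"
proof
  assume snoc: "f i s' = f i s @ [d]"
  obtain e where e: "[d, e] \<in> Pk f t 2 (t i s) []"
    using Pk_2_first_bit t_less assms by blast
  obtain y where "prefix (f i s' @ [e]) (fstar f t i (s' # y))"
    using codeword_then_bit[OF assms] by blast
  then have "[d, e] \<in> Pbark f t 2 i (f i s)"
    unfolding Pbark_def using snoc
    by (intro CollectI conjI exI[of _ "s' # y"]) (auto simp: strict_prefix_def)
  then show False
    using Pk_successor_disjoint_Pbark[OF assms, of s] e by blast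
qed

lemma card_Pbark_1_snoc_le: "i < m \<Longrightarrow> card (Pbark f t 1 i (f i s @ [d])) \<le> 1"
proof -
  assume i: "i < m"
  obtain e where "[d, e] \<in> Pk f t 2 (t i s) []"
    using Pk_2_first_bit t_less i by blast
  then have "[d, e] \<notin> Pbark f t 2 i (f i s)"
    using Pk_successor_disjoint_Pbark[OF i, of s] by blast
  then have "[e] \<notin> Pbark f t 1 i (f i s @ [d])"
    using Pbark_snoc[of "[e]" f t 1 i "f i s" d] by (auto simp: numeral_2_eq_2)
  moreover have "Pbark f t 1 i (f i s @ [d]) \<subseteq> {c. length c = 1}"
    by (rule subset_trans[OF Pbark_subset_Pk Pk_subset_length])
  moreover have "{c :: bool list. length c = 1} = {[False], [True]}"
    by (auto simp: length_Suc_conv)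
  ultimately have "Pbark f t 1 i (f i s @ [d]) \<subseteq> {[False], [True]} - {[e]}"
    by (simp add: subset_Diff_insert)
  also have "\<dots> = {[\<not> e]}"
    by (cases e) auto
  finally show ?thesis
    using card_mono[of "{[\<not> e]}"] by fastforce
qed

lemma Pk_2_successors_partition:
  assumes "i < m" and "s \<noteq> s'" and "f i s = f i s'"
  shows "Pk f t 2 (t i s) [] \<union> Pk f t 2 (t i s') [] = {c. length c = 2}
    \<and> card (Pk f t 2 (t i s) []) = 2 \<and> card (Pk f t 2 (t i s') []) = 2"
  using Pk_successors_disjoint[OF assms] card_Pk_2_ge[OF t_less[OF assms(1)]]
  by (intro card_disjoint_halves finite_bool_lists_length Pk_subset_length)
     (auto simp: card_bool_lists_length)

lemma card_Sset_le_2: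
  assumes "i < m"
  shows "card (Sset f i b) \<le> 2"
proof (rule ccontr)
  assume "\<not> ?thesis"
  then obtain T where "T \<subseteq> Sset f i b" and "card T = 3"
    by (metis not_less_eq_eq numeral_3_eq_3 numeral_2_eq_2 obtain_subset_with_card_n)
  then obtain x y z where xyz: "x \<noteq> y" "x \<noteq> z" "y \<noteq> z" "{x, y, z} \<subseteq> Sset f i b"
    by (auto simp: card_3_iff)
  then have codes: "f i x = f i y" "f i x = f i z" "f i y = f i z"
    by (auto simp: Sset_def)
  have "Pk f t 2 (t i z) [] \<subseteq> Pk f t 2 (t i x) [] \<union> Pk f t 2 (t i y) []"
    using Pk_2_successors_partition[OF assms xyz(1) codes(1)] Pk_subset_length by blast
  moreover have "Pk f t 2 (t i z) [] \<inter> (Pk f t 2 (t i x) [] \<union> Pk f t 2 (t i y) []) = {}"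
    using Pk_successors_disjoint[OF assms xyz(2) codes(2)] Pk_successors_disjoint[OF assms xyz(3) codes(3)]
    by blast
  ultimately have "Pk f t 2 (t i z) [] = {}"
    by blast
  then show False
    using card_Pk_2_ge[OF t_less[OF assms, of z]] by simp
qed

lemma card_Sset_le_1:
  assumes "i < m" and "Pbark f t 0 i b \<noteq> {}"
  shows "card (Sset f i b) \<le> 1"
proof (cases "finite (Sset f i b)")
  case True
  have "s = s'" if "s \<in> Sset f i b" "s' \<in> Sset f i b" for s s'
  proof (rule ccontr)
    assume "s \<noteq> s'"
    moreover have codes: "f i s = b" "f i s' = b"
      using that by (auto simp: Sset_def)
    ultimately have partition: "Pk f t 2 (t i s) [] \<union> Pk f t 2 (t i s') [] = {c. length c = 2}"
      using Pk_2_successors_partition[OF assms(1)] by auto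
    obtain w where w: "w \<in> Pbark f t 2 i b"
      using Pbark_nonempty[OF assms] by blast
    then have "length w = 2"
      using subset_trans[OF Pbark_subset_Pk Pk_subset_length] by blast
    then have "w \<in> Pk f t 2 (t i s) [] \<union> Pk f t 2 (t i s') []"
      unfolding partition by simp
    then show False
      using Pk_successor_disjoint_Pbark[OF assms(1), of s] Pk_successor_disjoint_Pbark[OF assms(1), of s']
        codes w by auto
  qed
  then show ?thesis
    using card_le_Suc0_iff_eq[OF True] by auto
qed simp

lemma codeword_nonempty:
  assumes "i < m" and "card (Pk f t 2 i []) = 2" and "s' \<noteq> s"
  shows "f i s \<noteq> []"
proof
  have Pk_eq: "Pk f t 2 (t i r) [] = Pk f t 2 i []" if "f i r = []" for r
    using Pk_subset_of_empty_codeword[of f i r t 2, OF that] card_Pk_2_ge[OF t_less[OF assms(1)]] assms(2)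
    by (metis card_mono card_subset_eq finite_Pk le_antisym)
  assume empty: "f i s = []"
  show False
  proof (cases "f i s' = []")
    case True
    then have "Pk f t 2 i [] \<inter> Pk f t 2 i [] = {}"
      using Pk_successors_disjoint[of i s' s] assms(1,3) empty Pk_eq[OF True] Pk_eq[OF empty] by simp
    then show False
      using assms(2) by simp
  next
    case False
    then have "Pbark f t 0 i [] \<noteq> {}"
      unfolding Pbark_def by (auto intro!: exI[of _ "[s']"] simp: strict_prefix_def)
    then obtain w where w: "w \<in> Pbark f t 2 i []"
      using Pbark_nonempty[OF assms(1)] by blast
    then have "w \<in> Pk f t 2 (t i s) []"
      unfolding Pk_eq[OF empty] using Pbark_subset_Pk by blast
    then show False
      using Pk_successor_disjoint_Pbark[OF assms(1), of s] empty w by auto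
  qed
qed

lemma codeword_not_singleton:
  assumes "i < m" and "Pk f t 2 i [] = {[False, a], [True, b]}"
  shows "f i s \<noteq> [d]"
proof
  assume single: "f i s = [d]"
  have "[d, c] \<in> Pk f t 2 i []" for c
  proof -
    obtain y where "prefix (f i s @ [c]) (fstar f t i (s # y))"
      using codeword_then_bit[OF assms(1)] by blast
    then show ?thesis
      unfolding Pk_def using single by (intro CollectI conjI exI[of _ "s # y"]) auto
  qed
  then have "[d, False] \<in> {[False, a], [True, b]}" "[d, True] \<in> {[False, a], [True, b]}"
    unfolding assms(2)[symmetric] by blast+
  then show False
    by (cases d) auto
qed

lemma codeword_length_ge_2:
  assumes "i < m" and "card (Pk f t 2 i []) = 2" and "s' \<noteq> s"
  shows "2 \<le> length (f i s)"
proof -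
  obtain a b where "Pk f t 2 i [] = {[False, a], [True, b]}"
    using Pk_2_eq_pair[OF assms(1,2)] by blast
  then show ?thesis
    using codeword_nonempty[OF assms] codeword_not_singleton[OF assms(1)]
    by (cases "f i s"; cases "tl (f i s)") auto
qed

end

theorem lemma14:
  fixes \<mu> :: "'s::finite \<Rightarrow> real" and m :: nat
    and f :: "nat \<Rightarrow> 's \<Rightarrow> bool list" and t :: "nat \<Rightarrow> 's \<Rightarrow> nat" and i :: nat
  assumes "card (UNIV :: 's set) \<ge> 2"
    and "\<And>s. 0 < \<mu> s \<and> \<mu> s \<le> 1" and "(\<Sum>s\<in>UNIV. \<mu> s) = 1"
    and "F1 \<mu> m f t" and "i < m"
  shows "(\<exists>a b. {[False, a], [True, b]} \<subseteq> Pk f t 2 i [])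
    \<and> card (Pk f t 2 i []) \<ge> 2
    \<and> (card (Pk f t 2 i []) = 2 \<longrightarrow>
         (\<forall>s. length (f i s) \<ge> 2) \<and>
         (\<exists>a b. Pk f t 2 i [] = {[False, a], [True, b]} \<and> Pbark f t 2 i [] = {[False, a], [True, b]}))
    \<and> (\<forall>s s'. s \<noteq> s' \<and> f i s = f i s' \<longrightarrow>
         card (Pk f t 2 (t i s) []) = 2 \<and> card (Pk f t 2 (t i s') []) = 2)
    \<and> (\<forall>s. (Pbark f t 0 i (f i s) \<noteq> {} \<longrightarrow> card (Sset f i (f i s)) \<le> 1) \<and>
           (Pbark f t 0 i (f i s) = {} \<longrightarrow> card (Sset f i (f i s)) \<le> 2))
    \<and> (\<forall>s s'. f i s' \<noteq> f i s @ [False] \<and> f i s' \<noteq> f i s @ [True])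
    \<and> (\<forall>s. card (Pbark f t 1 i (f i s @ [False])) \<le> 1 \<and> card (Pbark f t 1 i (f i s @ [True])) \<le> 1)"
proof -
  interpret complete_two_dec m f t
    using assms(4) by unfold_locales (auto simp: F1_def)
  have other: "\<exists>s'. s' \<noteq> s" for s :: 's
  proof (rule ccontr)
    assume "\<nexists>s'. s' \<noteq> s"
    then have "UNIV = {s}"
      by auto
    then have "card (UNIV :: 's set) = card {s}"
      by (rule arg_cong)
    then show False
      using assms(1) by simp
  qed
  have card_2: "(\<forall>s. 2 \<le> length (f i s)) \<and>
      (\<exists>a b. Pk f t 2 i [] = {[False, a], [True, b]} \<and> Pbark f t 2 i [] = {[False, a], [True, b]})"
    if "card (Pk f t 2 i []) = 2"
  proof -
    have "\<forall>s. 2 \<le> length (f i s)"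
      using codeword_length_ge_2[OF assms(5) that] other by blast
    moreover from this have "Pbark f t 2 i [] = Pk f t 2 i []"
      by (intro Pbark_Nil_eq_Pk) (metis list.size(3) not_numeral_le_zero)
    ultimately show ?thesis
      using Pk_2_eq_pair[OF assms(5) that] by auto
  qed
  show ?thesis
  proof (intro conjI allI impI)
    fix s s'
    assume "s \<noteq> s' \<and> f i s = f i s'"
    then show "card (Pk f t 2 (t i s) []) = 2" and "card (Pk f t 2 (t i s') []) = 2"
      using Pk_2_successors_partition[OF assms(5), of s s'] by simp_all
  qed (use Pk_2_both_bits[OF assms(5)] card_Pk_2_ge[OF assms(5)] card_2 card_Sset_le_1[OF assms(5)]
      card_Sset_le_2[OF assms(5)] codeword_not_snoc[OF assms(5)] card_Pbark_1_snoc_le[OF assms(5)]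
      in simp_all)
qed

end
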